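(* Let $G$ and $H$ be finite simple graphs with ${\rm diam}(G\diamond H)=2$. Then $$E((G\diamond H)_{SR})=TW(G\diamond H)\cup E(\overline{G}\,\Box\,\overline{H})\cup E(G\times\overline{H})\cup E(\overline{G}\times H),$$ where all these edge sets are viewed as sets of unordered pairs of elements of $V(G)\times V(H)$.
   Context: The modular product $G\diamond H$ has vertex set $V(G)\times V(H)$; distinct vertices $(g,h)$ and $(g',h')$ are adjacent iff ($g=g'$ and $hh'\in E(H)$), or ($gg'\in E(G)$ and $h=h'$), or ($gg'\in E(G)$ and $hh'\in E(H)$), or ($g\neq g'$, $h\neq h'$, $gg'\notin E(G)$ and $hh'\notin E(H)$). $\overline{X}$ is the complement of $X$. In the Cartesian product $A\Box B$, $(a,b)(a',b')$ is an edge iff ($a=a'$ and $bb'\in E(B)$) or ($aa'\in E(A)$ and $b=b'$); in the direct product $A\times B$ it is an edge iff $aa'\in E(A)$ and $bb'\in E(B)$. For a graph $X$, $TW(X)$ is the set of edges $uv$ of $X$ with $N_X[u]=N_X[v]$. Two distinct vertices $u,v$ of $X$ in the same component are mutually maximally distant if there is no $x\in N_X(u)$ with $d_X(x,v)=d_X(u,v)+1$ and no $y\in N_X(v)$ with $d_X(y,u)=d_X(u,v)+1$; the strong resolving graph $X_{SR}$ has as edges exactly the mutually maximally distant pairs. *)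

theory Defs
  imports Main "HOL-Library.Extended_Nat"
begin

definition finite_simple_graph :: "'a set \<Rightarrow> 'a set set \<Rightarrow> bool" where
  "finite_simple_graph V E \<longleftrightarrow> finite V \<and>
     (\<forall>e\<in>E. \<exists>u v. u \<in> V \<and> v \<in> V \<and> u \<noteq> v \<and> e = {u, v})"

definition edge_rel :: "'a set set \<Rightarrow> ('a \<times> 'a) set" where
  "edge_rel E = {(u, v). u \<noteq> v \<and> {u, v} \<in> E}"

text \<open>Distance: length of a shortest walk; infinity if none.\<close>
definition gdist :: "'a set set \<Rightarrow> 'a \<Rightarrow> 'a \<Rightarrow> enat" where
  "gdist E u v = (INF n \<in> {n. (u, v) \<in> (edge_rel E) ^^ n}. enat n)"

definition diam :: "'a set \<Rightarrow> 'a set set \<Rightarrow> enat" where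
  "diam V E = (SUP u \<in> V. SUP v \<in> V. gdist E u v)"

definition open_nbhd :: "'a set set \<Rightarrow> 'a \<Rightarrow> 'a set" where
  "open_nbhd E u = {v. v \<noteq> u \<and> {u, v} \<in> E}"

definition closed_nbhd :: "'a set set \<Rightarrow> 'a \<Rightarrow> 'a set" where
  "closed_nbhd E u = insert u (open_nbhd E u)"

definition TW :: "'a set set \<Rightarrow> 'a set set" where
  "TW E = {{u, v} | u v. u \<noteq> v \<and> {u, v} \<in> E \<and> closed_nbhd E u = closed_nbhd E v}"

definition mutually_maximally_distant :: "'a set \<Rightarrow> 'a set set \<Rightarrow> 'a \<Rightarrow> 'a \<Rightarrow> bool" where
  "mutually_maximally_distant V E u v \<longleftrightarrow>
     u \<in> V \<and> v \<in> V \<and> u \<noteq> v \<and> gdist E u v \<noteq> \<infinity> \<and>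
     \<not> (\<exists>x \<in> open_nbhd E u. gdist E x v = gdist E u v + 1) \<and>
     \<not> (\<exists>y \<in> open_nbhd E v. gdist E y u = gdist E u v + 1)"

definition SR_edges :: "'a set \<Rightarrow> 'a set set \<Rightarrow> 'a set set" where
  "SR_edges V E = {{u, v} | u v. mutually_maximally_distant V E u v}"

definition compl_edges :: "'a set \<Rightarrow> 'a set set \<Rightarrow> 'a set set" where
  "compl_edges V E = {{u, v} | u v. u \<in> V \<and> v \<in> V \<and> u \<noteq> v \<and> {u, v} \<notin> E}"

definition modular_edges ::
  "'a set \<Rightarrow> 'a set set \<Rightarrow> 'b set \<Rightarrow> 'b set set \<Rightarrow> ('a \<times> 'b) set set" where
  "modular_edges VG EG VH EH =
     {{(g, h), (g', h')} | g h g' h'. g \<in> VG \<and> g' \<in> VG \<and> h \<in> VH \<and> h' \<in> VH \<and>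
        (g, h) \<noteq> (g', h') \<and>
        ((g = g' \<and> {h, h'} \<in> EH) \<or> ({g, g'} \<in> EG \<and> h = h') \<or>
         ({g, g'} \<in> EG \<and> {h, h'} \<in> EH) \<or>
         (g \<noteq> g' \<and> h \<noteq> h' \<and> {g, g'} \<notin> EG \<and> {h, h'} \<notin> EH))}"

definition cartesian_edges ::
  "'a set \<Rightarrow> 'a set set \<Rightarrow> 'b set \<Rightarrow> 'b set set \<Rightarrow> ('a \<times> 'b) set set" where
  "cartesian_edges VA EA VB EB =
     {{(a, b), (a', b')} | a b a' b'. a \<in> VA \<and> a' \<in> VA \<and> b \<in> VB \<and> b' \<in> VB \<and>
        ((a = a' \<and> {b, b'} \<in> EB) \<or> ({a, a'} \<in> EA \<and> b = b'))}"

definition direct_edges ::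
  "'a set \<Rightarrow> 'a set set \<Rightarrow> 'b set \<Rightarrow> 'b set set \<Rightarrow> ('a \<times> 'b) set set" where
  "direct_edges VA EA VB EB =
     {{(a, b), (a', b')} | a b a' b'. a \<in> VA \<and> a' \<in> VA \<and> b \<in> VB \<and> b' \<in> VB \<and>
        {a, a'} \<in> EA \<and> {b, b'} \<in> EB}"

end

theory Submission
  imports Defs
begin

text \<open>In a graph of diameter at most 2, every pair of non-adjacent vertices is at the maximum
  distance 2, so it is mutually maximally distant; an adjacent pair is mutually maximally distant
  iff no neighbour of one end is at distance 2 from the other, i.e. iff the two ends are true twins.
  Hence the strong resolving graph consists of the twin edges together with the complement.
  For the modular product, a pair of distinct vertices is non-adjacent exactly when it is an edge
  of the Cartesian product of the complements or of one of the two mixed direct products.\<close>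

lemma gdist_le_walk_length: "(u, v) \<in> edge_rel E ^^ n \<Longrightarrow> gdist E u v \<le> enat n"
  unfolding gdist_def by (rule INF_lower2[of n]) auto

lemma gdist_refl [simp]: "gdist E u u = 0"
  using gdist_le_walk_length[where n=0 and u=u and v=u and E=E]
  by (simp add: zero_enat_def[symmetric])

lemma gdist_ge_2:
  assumes "u \<noteq> v" "{u, v} \<notin> E"
  shows "2 \<le> gdist E u v"
  unfolding gdist_def
proof (rule INF_greatest)
  fix n assume "n \<in> {n. (u, v) \<in> edge_rel E ^^ n}"
  with assms have "n \<noteq> 0" by (cases n) auto
  moreover from \<open>n \<in> _\<close> assms have "n \<noteq> 1" by (auto simp: edge_rel_def)
  ultimately show "2 \<le> enat n" by (simp add: numeral_eq_enat)
qed

lemma gdist_adjacent: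
  assumes "u \<noteq> v" "{u, v} \<in> E"
  shows "gdist E u v = 1"
proof (rule antisym)
  have "(u, v) \<in> edge_rel E ^^ 1" using assms by (simp add: edge_rel_def)
  then show "gdist E u v \<le> 1" using gdist_le_walk_length by (fastforce simp: one_enat_def)
  show "1 \<le> gdist E u v"
    unfolding gdist_def
  proof (rule INF_greatest)
    fix n assume "n \<in> {n. (u, v) \<in> edge_rel E ^^ n}"
    with assms have "n \<noteq> 0" by (cases n) auto
    then show "1 \<le> enat n" by (simp add: one_enat_def)
  qed
qed

lemma gdist_le_diam: "u \<in> V \<Longrightarrow> v \<in> V \<Longrightarrow> gdist E u v \<le> diam V E"
  unfolding diam_def by (blast intro: SUP_upper2)

lemma gdist_diam_le_2:
  assumes "diam V E \<le> 2" "u \<in> V" "v \<in> V"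
  shows "gdist E u v = (if u = v then 0 else if {u, v} \<in> E then 1 else 2)"
proof -
  have "gdist E u v \<le> 2" using gdist_le_diam[OF assms(2,3), of E] assms(1) by order
  then show ?thesis using gdist_ge_2[of u v E] gdist_adjacent[of u v E] by auto
qed

lemma gdist_eq_2_iff_not_closed_nbhd:
  assumes "diam V E \<le> 2" "u \<in> V" "v \<in> V"
  shows "gdist E u v = 2 \<longleftrightarrow> u \<notin> closed_nbhd E v"
  using gdist_diam_le_2[OF assms]
  by (auto simp: closed_nbhd_def open_nbhd_def insert_commute)

lemma closed_nbhd_eq_iff_open_nbhd_subset:
  assumes "u \<noteq> v" "{u, v} \<in> E"
  shows "closed_nbhd E u = closed_nbhd E v \<longleftrightarrow>
           open_nbhd E u \<subseteq> closed_nbhd E v \<and> open_nbhd E v \<subseteq> closed_nbhd E u"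
  using assms by (auto simp: closed_nbhd_def open_nbhd_def insert_commute)

lemma mutually_maximally_distant_diam_le_2:
  assumes edges_in: "\<And>u v. {u, v} \<in> E \<Longrightarrow> u \<in> V" and diam: "diam V E \<le> 2"
  shows "mutually_maximally_distant V E u v \<longleftrightarrow>
           u \<in> V \<and> v \<in> V \<and> u \<noteq> v \<and> ({u, v} \<in> E \<longrightarrow> closed_nbhd E u = closed_nbhd E v)"
proof (cases "u \<in> V \<and> v \<in> V \<and> u \<noteq> v")
  case False
  then show ?thesis by (auto simp: mutually_maximally_distant_def)
next
  case True
  then have u: "u \<in> V" and v: "v \<in> V" and "u \<noteq> v" by auto
  have nbhd_in: "open_nbhd E w \<subseteq> V" for w
    using edges_in by (auto simp: open_nbhd_def insert_commute)
  have no_far_nbr: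
    "\<not> (\<exists>x \<in> open_nbhd E w. gdist E x z = 2) \<longleftrightarrow> open_nbhd E w \<subseteq> closed_nbhd E z"
    if "z \<in> V" for w z
    using gdist_eq_2_iff_not_closed_nbhd[OF diam _ that] nbhd_in by blast
  show ?thesis
  proof (cases "{u, v} \<in> E")
    case True
    then have "gdist E u v = 1"
      using gdist_diam_le_2[OF diam u v] \<open>u \<noteq> v\<close> by simp
    then show ?thesis
      using no_far_nbr[OF u, of v] no_far_nbr[OF v, of u] u v \<open>u \<noteq> v\<close> True
        closed_nbhd_eq_iff_open_nbhd_subset[OF \<open>u \<noteq> v\<close> True]
      by (simp add: mutually_maximally_distant_def one_add_one)
  next
    case False
    then have "gdist E u v = 2"
      using gdist_diam_le_2[OF diam u v] \<open>u \<noteq> v\<close> by simp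
    moreover have "gdist E x y \<noteq> 2 + 1" if "x \<in> V" "y \<in> V" for x y
      using gdist_diam_le_2[OF diam that] by simp
    ultimately show ?thesis
      using nbhd_in u v \<open>u \<noteq> v\<close> False
      by (auto simp: mutually_maximally_distant_def)
  qed
qed

lemma SR_edges_diam_le_2:
  assumes "\<And>u v. {u, v} \<in> E \<Longrightarrow> u \<in> V" and "diam V E \<le> 2"
  shows "SR_edges V E = TW E \<union> compl_edges V E"
proof -
  have "SR_edges V E = {{u, v} |u v. u \<in> V \<and> v \<in> V \<and> u \<noteq> v \<and>
                         ({u, v} \<in> E \<longrightarrow> closed_nbhd E u = closed_nbhd E v)}"
    unfolding SR_edges_def by (simp only: mutually_maximally_distant_diam_le_2[OF assms])
  also have "\<dots> = TW E \<union> compl_edges V E"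
  proof -
    have "u \<in> V \<and> v \<in> V" if "{u, v} \<in> E" for u v
      using assms(1)[OF that] assms(1)[of v u] that by (simp add: insert_commute)
    then show ?thesis unfolding TW_def compl_edges_def by blast
  qed
  finally show ?thesis .
qed

lemma doubletons_over_product:
  "{{u, v} |u v. u \<in> A \<times> B \<and> v \<in> A \<times> B \<and> P u v} =
   {{(a, b), (a', b')} |a b a' b'. a \<in> A \<and> a' \<in> A \<and> b \<in> B \<and> b' \<in> B \<and> P (a, b) (a', b')}"
  by auto

lemma finite_simple_graph_no_loop:
  assumes "finite_simple_graph V E"
  shows "{a} \<notin> E"
proof
  assume "{a} \<in> E"
  then obtain u v where "u \<noteq> v" "{a} = {u, v}"
    using assms unfolding finite_simple_graph_def by blast
  then show False by (metis insertCI singletonD)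
qed

lemma doubleton_in_compl_edges_iff:
  "{x, y} \<in> compl_edges V E \<longleftrightarrow> x \<in> V \<and> y \<in> V \<and> x \<noteq> y \<and> {x, y} \<notin> E"
  unfolding compl_edges_def by (auto simp: doubleton_eq_iff insert_commute)

lemma doubleton_in_modular_edges_iff:
  "{(g, h), (g', h')} \<in> modular_edges VG EG VH EH \<longleftrightarrow>
     g \<in> VG \<and> g' \<in> VG \<and> h \<in> VH \<and> h' \<in> VH \<and> (g, h) \<noteq> (g', h') \<and>
     ((g = g' \<and> {h, h'} \<in> EH) \<or> ({g, g'} \<in> EG \<and> h = h') \<or>
      ({g, g'} \<in> EG \<and> {h, h'} \<in> EH) \<or>
      (g \<noteq> g' \<and> h \<noteq> h' \<and> {g, g'} \<notin> EG \<and> {h, h'} \<notin> EH))"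
  (is "_ \<longleftrightarrow> ?adj g h g' h'")
proof
  have sym: "?adj g h g' h' \<longleftrightarrow> ?adj g' h' g h" for g h g' h'
    by (auto simp: insert_commute)
  assume "{(g, h), (g', h')} \<in> modular_edges VG EG VH EH"
  then obtain a b a' b' where eq: "{(g, h), (g', h')} = {(a, b), (a', b')}" and "?adj a b a' b'"
    unfolding modular_edges_def by blast
  moreover from eq have
    "(g, h) = (a, b) \<and> (g', h') = (a', b') \<or> (g, h) = (a', b') \<and> (g', h') = (a, b)"
    by (simp add: doubleton_eq_iff)
  ultimately show "?adj g h g' h'" using sym by blast
next
  assume "?adj g h g' h'"
  then show "{(g, h), (g', h')} \<in> modular_edges VG EG VH EH"
    unfolding modular_edges_def by blast
qed

lemma modular_edges_in_product:
  "{u, v} \<in> modular_edges VG EG VH EH \<Longrightarrow> u \<in> VG \<times> VH"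
  using doubleton_in_modular_edges_iff[of "fst u" "snd u" "fst v" "snd v"]
  by (simp add: mem_Times_iff)

lemma compl_edges_modular_product:
  assumes "finite_simple_graph VG EG" and "finite_simple_graph VH EH"
  shows "compl_edges (VG \<times> VH) (modular_edges VG EG VH EH) =
           cartesian_edges VG (compl_edges VG EG) VH (compl_edges VH EH)
           \<union> direct_edges VG EG VH (compl_edges VH EH)
           \<union> direct_edges VG (compl_edges VG EG) VH EH"
proof -
  define nonadj where "nonadj a b a' b' \<longleftrightarrow>
      (a = a' \<and> b \<noteq> b' \<and> {b, b'} \<notin> EH) \<or> (a \<noteq> a' \<and> {a, a'} \<notin> EG \<and> b = b') \<or>
      ({a, a'} \<in> EG \<and> b \<noteq> b' \<and> {b, b'} \<notin> EH) \<or> (a \<noteq> a' \<and> {a, a'} \<notin> EG \<and> {b, b'} \<in> EH)"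
    for a b a' b'
  have "compl_edges (VG \<times> VH) (modular_edges VG EG VH EH) =
          {{(a, b), (a', b')} |a b a' b'.
             a \<in> VG \<and> a' \<in> VG \<and> b \<in> VH \<and> b' \<in> VH \<and> nonadj a b a' b'}"
  proof -
    have "a \<in> VG \<and> a' \<in> VG \<and> b \<in> VH \<and> b' \<in> VH \<and>
          (a, b) \<noteq> (a', b') \<and> {(a, b), (a', b')} \<notin> modular_edges VG EG VH EH \<longleftrightarrow>
          a \<in> VG \<and> a' \<in> VG \<and> b \<in> VH \<and> b' \<in> VH \<and> nonadj a b a' b'" for a b a' b'
      using finite_simple_graph_no_loop[OF assms(1), of a]
        finite_simple_graph_no_loop[OF assms(2), of b]
      unfolding doubleton_in_modular_edges_iff nonadj_def by auto
    then show ?thesis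
      unfolding compl_edges_def doubletons_over_product by (simp only:)
  qed
  also have "\<dots> = cartesian_edges VG (compl_edges VG EG) VH (compl_edges VH EH)
           \<union> direct_edges VG EG VH (compl_edges VH EH)
           \<union> direct_edges VG (compl_edges VG EG) VH EH"
    unfolding cartesian_edges_def direct_edges_def doubleton_in_compl_edges_iff nonadj_def
    by blast
  finally show ?thesis .
qed

theorem mainTheorem7:
  fixes VG :: "'a set" and EG :: "'a set set" and VH :: "'b set" and EH :: "'b set set"
  assumes "finite_simple_graph VG EG" and "finite_simple_graph VH EH"
    and "diam (VG \<times> VH) (modular_edges VG EG VH EH) = 2"
  shows "SR_edges (VG \<times> VH) (modular_edges VG EG VH EH) =
           TW (modular_edges VG EG VH EH)
           \<union> cartesian_edges VG (compl_edges VG EG) VH (compl_edges VH EH)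
           \<union> direct_edges VG EG VH (compl_edges VH EH)
           \<union> direct_edges VG (compl_edges VG EG) VH EH"
proof -
  have "diam (VG \<times> VH) (modular_edges VG EG VH EH) \<le> 2"
    using assms(3) by simp
  with modular_edges_in_product have "SR_edges (VG \<times> VH) (modular_edges VG EG VH EH) =
          TW (modular_edges VG EG VH EH) \<union> compl_edges (VG \<times> VH) (modular_edges VG EG VH EH)"
    by (rule SR_edges_diam_le_2)
  then show ?thesis
    using compl_edges_modular_product[OF assms(1,2)] by (simp add: Un_assoc)
qed

end
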